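(* Let $\mathcal{P}=q^*(t)$, $t\in[0,1]$, be any collision-free minimizer of \[\inf_{(a_1,a_2,b_1,b_2)\in\mathcal{S}}\ \inf_{\{q\in H^1([0,1],\chi):\ q(0)=Q_{s_1},\ q(1)=Q_{e_1}\}}\mathcal{A}(q),\] and let $q^*(t)$, $t\in\mathbb{R}$, also denote its extension to a solution of the Newtonian equations $\ddot q_i=\sum_{j\neq i}\frac{q_j-q_i}{|q_j-q_i|^3}$ defined for all $t\in\mathbb{R}$ (which is periodic of period $4$). Then for all $t\in\mathbb{R}$, \[q^*_i(t)=R_xq^*_i(-t)\ (i=1,2,3),\qquad q^*_1(t+2)=R_xR_yq^*_1(t),\quad q^*_2(t+2)=R_xR_yq^*_3(t),\quad q^*_3(t+2)=R_xR_yq^*_2(t),\] where $R_x=\begin{bmatrix}1&0\\0&-1\end{bmatrix}$ and $R_y=\begin{bmatrix}-1&0\\0&1\end{bmatrix}$ act on the position vectors $q^*_i\in\mathbb{R}^2$ (viewed as column vectors).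
   Context: Planar three-body problem with masses $m_1=m_2=m_3=1$; $q_i=(q_{ix},q_{iy})\in\mathbb{R}^2$; $\chi=\{q: q_1+q_2+q_3=0\}$; $\mathcal{A}(q)=\int_0^1\big(\tfrac12\sum_{i=1}^3|\dot q_i|^2+\sum_{i<j}\frac{1}{|q_i-q_j|}\big)dt$. $Q_{s_1}$: $q_1=(-2a_1-a_2,0)$, $q_2=(a_1-a_2,0)$, $q_3=(a_1+2a_2,0)$; $Q_{e_1}$: $q_1=(0,-2b_1)$, $q_2=(-b_2,b_1)$, $q_3=(b_2,b_1)$; $\mathcal{S}=\{a_1\ge0,\ a_2\ge0,\ b_1,b_2\in\mathbb{R}\}$. *)

theory Defs
  imports "HOL-Analysis.Analysis"
begin

text \<open>Bodies are indexed by 1, 2, 3; a motion is q :: nat => real => real^2,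
  q i t being the position of body i at time t.\<close>

type_synonym motion = "nat \<Rightarrow> real \<Rightarrow> real^2"

text \<open>H^1([0,1]) for a single R^2-valued coordinate path: absolutely continuous
  with square-integrable derivative, i.e. the indefinite integral of an L^2 function.\<close>
definition H1_01 :: "(real \<Rightarrow> real^2) \<Rightarrow> bool" where
  "H1_01 f \<longleftrightarrow> (\<exists>v. v \<in> borel_measurable lborel \<and>
      set_integrable lborel {0..1} (\<lambda>t. (norm (v t))^2) \<and>
      (\<forall>t\<in>{0..1}. f t = f 0 + (LINT s:{0..t}|lborel. v s)))"

definition pairpot :: "real^2 \<Rightarrow> real^2 \<Rightarrow> ennreal" where
  "pairpot x y = (if x = y then \<infinity> else ennreal (1 / norm (x - y)))"

definition action :: "motion \<Rightarrow> ennreal" where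
  "action q = (\<integral>\<^sup>+ t\<in>{0..1}.
      ennreal ((1/2) * (\<Sum>i\<in>{1,2,3}. (norm (vector_derivative (q i) (at t)))^2))
      + pairpot (q 1 t) (q 2 t) + pairpot (q 1 t) (q 3 t) + pairpot (q 2 t) (q 3 t) \<partial>lborel)"

definition Qs1 :: "real \<Rightarrow> real \<Rightarrow> nat \<Rightarrow> real^2" where
  "Qs1 a1 a2 i = (if i = 1 then vector [-2*a1 - a2, 0]
                  else if i = 2 then vector [a1 - a2, 0]
                  else vector [a1 + 2*a2, 0])"

definition Qe1 :: "real \<Rightarrow> real \<Rightarrow> nat \<Rightarrow> real^2" where
  "Qe1 b1 b2 i = (if i = 1 then vector [0, -2*b1]
                  else if i = 2 then vector [-b2, b1]
                  else vector [b2, b1])"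

definition admissible :: "motion \<Rightarrow> bool" where
  "admissible q \<longleftrightarrow> (\<forall>i\<in>{1,2,3}. H1_01 (q i)) \<and>
     (\<forall>t\<in>{0..1}. q 1 t + q 2 t + q 3 t = 0) \<and>
     (\<exists>a1 a2 b1 b2. a1 \<ge> 0 \<and> a2 \<ge> 0 \<and>
        (\<forall>i\<in>{1,2,3}. q i 0 = Qs1 a1 a2 i \<and> q i 1 = Qe1 b1 b2 i))"

definition Rx :: "real^2^2" where "Rx = vector [vector [1, 0], vector [0, -1]]"
definition Ry :: "real^2^2" where "Ry = vector [vector [-1, 0], vector [0, 1]]"

end

(*
  The minimizer solves Newton's equations on [0,1], so its action can be differentiated along
  variations that move the end configurations inside their admissible families.  Integrating the
  Euler-Lagrange equation leaves only boundary terms, which give natural boundary conditions: at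
  t = 0 all velocities are vertical, and at t = 1 body 1 moves horizontally while bodies 2 and 3
  have velocities exchanged by R_y up to sign.  Hence the Cauchy data at t = 0 are fixed by
  q(t) |-> R_x q(-t), and those at t = 1 by q(t) |-> R_y q(2 - t) with bodies 2 and 3 exchanged.
  Both maps send collision-free solutions to solutions, and such solutions are determined by
  their data at one time (Gronwall's inequality for the energy of their difference).  So q has
  both symmetries, and composing them gives the half-period relation because R_x R_y = -1.
*)

theory Submission
  imports Defs
begin

lemma has_real_derivative_inner:
  fixes f g :: "real \<Rightarrow> 'a::real_inner"
  assumes "(f has_vector_derivative f') (at t within S)" "(g has_vector_derivative g') (at t within S)"
  shows "((\<lambda>t. inner (f t) (g t)) has_real_derivative (inner f' (g t) + inner (f t) g')) (at t within S)"
  using bounded_bilinear.has_vector_derivative[OF bounded_bilinear_inner assms]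
  by (simp add: has_real_derivative_iff_has_vector_derivative add.commute)

lemma has_real_derivative_norm_power2:
  fixes f :: "real \<Rightarrow> 'a::real_inner"
  assumes "(f has_vector_derivative f') (at t within S)"
  shows "((\<lambda>t. norm (f t) ^ 2) has_real_derivative 2 * inner (f t) f') (at t within S)"
  using has_real_derivative_inner[OF assms assms]
  by (simp add: power2_norm_eq_inner inner_commute)

lemma has_real_derivative_inverse_norm:
  fixes f :: "real \<Rightarrow> 'a::real_inner"
  assumes f: "(f has_vector_derivative f') (at t within S)" and nz: "f t \<noteq> 0"
  shows "((\<lambda>t. 1 / norm (f t)) has_real_derivative - inner (f t) f' / norm (f t) ^ 3) (at t within S)"
proof -
  from has_derivative_compose[OF f[unfolded has_vector_derivative_def] has_derivative_norm[OF nz]]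
  have "((\<lambda>t. norm (f t)) has_real_derivative inner (f t) f' / norm (f t)) (at t within S)"
    unfolding has_field_derivative_def
    by (rule has_derivative_eq_rhs) (simp add: fun_eq_iff sgn_div_norm inner_commute field_simps)
  from DERIV_inverse_fun[OF this] nz show ?thesis
    by (simp add: divide_inverse power3_eq_cube power2_eq_square mult_ac)
qed

lemma continuous_on_compact_bounded_below:
  fixes g :: "'a::topological_space \<Rightarrow> real"
  assumes "compact S" "continuous_on S g" "\<And>t. t \<in> S \<Longrightarrow> 0 < g t"
  shows "\<exists>r>0. \<forall>t\<in>S. r \<le> g t"
proof (cases "S = {}")
  case False
  with continuous_attains_inf[OF assms(1) this assms(2)] obtain x where "x \<in> S" "\<forall>t\<in>S. g x \<le> g t"
    by blast
  with assms(3) show ?thesis by blast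
qed (auto intro: exI[of _ 1])

lemma gronwall_zero:
  fixes E E' :: "real \<Rightarrow> real"
  assumes "lo \<le> t0" "t0 \<le> hi"
    and deriv: "\<And>t. t \<in> {lo..hi} \<Longrightarrow> (E has_real_derivative E' t) (at t)"
    and bound: "\<And>t. t \<in> {lo..hi} \<Longrightarrow> \<bar>E' t\<bar> \<le> C * E t"
    and nonneg: "\<And>t. t \<in> {lo..hi} \<Longrightarrow> 0 \<le> E t"
    and zero: "E t0 = 0"
    and t: "t \<in> {lo..hi}"
  shows "E t = 0"
proof -
  have "E t \<le> 0"
  proof (cases "t0 \<le> t")
    case True
    let ?h = "\<lambda>s. E s * exp (- C * s)"
    have "?h t \<le> ?h t0"
    proof (rule DERIV_nonpos_imp_nonincreasing[OF True])
      fix x assume "t0 \<le> x" "x \<le> t"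
      then have x: "x \<in> {lo..hi}" using t assms(1,2) by auto
      have "(?h has_real_derivative (E' x - C * E x) * exp (- C * x)) (at x)"
        by (auto intro!: derivative_eq_intros deriv[OF x] simp: algebra_simps)
      moreover have "(E' x - C * E x) * exp (- C * x) \<le> 0"
        using bound[OF x] by (auto intro!: mult_nonpos_nonneg)
      ultimately show "\<exists>y. (?h has_real_derivative y) (at x) \<and> y \<le> 0" by blast
    qed
    with zero show ?thesis by (simp add: mult_le_0_iff)
  next
    case False
    let ?h = "\<lambda>s. E s * exp (C * s)"
    have "t \<le> t0" using False by simp
    then have "?h t \<le> ?h t0"
    proof (rule DERIV_nonneg_imp_nondecreasing)
      fix x assume "t \<le> x" "x \<le> t0"
      then have x: "x \<in> {lo..hi}" using t assms(1,2) by auto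
      have "(?h has_real_derivative (E' x + C * E x) * exp (C * x)) (at x)"
        by (auto intro!: derivative_eq_intros deriv[OF x] simp: algebra_simps)
      moreover have "(E' x + C * E x) * exp (C * x) \<ge> 0"
        using bound[OF x] by (auto intro!: mult_nonneg_nonneg)
      ultimately show "\<exists>y. (?h has_real_derivative y) (at x) \<and> 0 \<le> y" by blast
    qed
    with zero show ?thesis by (simp add: mult_le_0_iff)
  qed
  with nonneg[OF t] show ?thesis by simp
qed

definition inverse_square_field :: "'a::real_normed_vector \<Rightarrow> 'a" where
  "inverse_square_field x = (1 / norm x ^ 3) *\<^sub>R x"

lemma inverse_square_field_minus: "inverse_square_field (- x) = - inverse_square_field x"
  by (simp add: inverse_square_field_def)

lemma inverse_cube_diff_bound:
  fixes a b r :: real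
  assumes "r \<le> a" "r \<le> b" "0 < r"
  shows "\<bar>1/a^3 - 1/b^3\<bar> * b \<le> 3/r^3 * \<bar>a - b\<bar>"
proof -
  have a: "0 < a" and b: "0 < b" using assms by auto
  have "r^3 \<le> a * b^2" "r^3 \<le> a^2 * b" "r^3 \<le> a^3"
    using mult_mono[OF assms(1) mult_mono[OF assms(2) assms(2)]]
      mult_mono[OF mult_mono[OF assms(1) assms(1)] assms(2)] power_mono[OF assms(1), of 3] assms
    by (simp_all add: power2_eq_square power3_eq_cube)
  then have "a^2 * r^3 + a*b * r^3 + b^2 * r^3 \<le> a^2 * (a * b^2) + a*b * (a^2 * b) + b^2 * a^3"
    using a b by (intro add_mono mult_left_mono) auto
  then have "(a^2 + a*b + b^2) / (a^3 * b^2) \<le> 3 / r^3"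
    using a b assms(3) by (simp add: field_simps power2_eq_square power3_eq_cube)
  moreover have "\<bar>1/a^3 - 1/b^3\<bar> * b = \<bar>a - b\<bar> * ((a^2 + a*b + b^2) / (a^3 * b^2))"
  proof -
    have "(1/a^3 - 1/b^3) * b = (b - a) * ((a^2 + a*b + b^2) / (a^3 * b^2))"
      using a b by (simp add: field_simps power2_eq_square power3_eq_cube)
    moreover have "0 \<le> (a^2 + a*b + b^2) / (a^3 * b^2)" using a b by simp
    ultimately show ?thesis using b by (metis abs_minus_commute abs_mult abs_of_nonneg abs_of_pos)
  qed
  ultimately show ?thesis by (metis abs_ge_zero mult.commute mult_left_mono)
qed

lemma inverse_square_field_lipschitz:
  fixes x y :: "'a::real_normed_vector"
  assumes "r \<le> norm x" "r \<le> norm y" "0 < r"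
  shows "norm (inverse_square_field x - inverse_square_field y) \<le> 4/r^3 * norm (x - y)"
proof -
  have "inverse_square_field x - inverse_square_field y
      = (1 / norm x ^ 3) *\<^sub>R (x - y) + (1/norm x^3 - 1/norm y^3) *\<^sub>R y"
    unfolding inverse_square_field_def by (simp add: algebra_simps)
  moreover have "norm ((1 / norm x ^ 3) *\<^sub>R (x - y)) \<le> 1/r^3 * norm (x - y)"
  proof -
    have "r^3 \<le> norm x ^ 3" using assms by (auto intro: power_mono)
    then have "1 / norm x ^ 3 \<le> 1/r^3" using assms(3) by (intro frac_le) auto
    from mult_right_mono[OF this norm_ge_zero[of "x - y"]] show ?thesis by simp
  qed
  moreover have "norm ((1/norm x^3 - 1/norm y^3) *\<^sub>R y) \<le> 3/r^3 * norm (x - y)"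
  proof -
    have "norm ((1/norm x^3 - 1/norm y^3) *\<^sub>R y) \<le> 3/r^3 * \<bar>norm x - norm y\<bar>"
      using inverse_cube_diff_bound[OF assms] by simp
    also have "\<dots> \<le> 3/r^3 * norm (x - y)"
      using assms(3) by (intro mult_left_mono norm_triangle_ineq3) auto
    finally show ?thesis .
  qed
  ultimately have "norm (inverse_square_field x - inverse_square_field y) \<le> 1/r^3 * norm (x - y) + 3/r^3 * norm (x - y)"
    by (metis add_mono norm_triangle_le)
  then show ?thesis by (simp add: field_simps)
qed

definition force :: "motion \<Rightarrow> nat \<Rightarrow> real \<Rightarrow> real^2" where
  "force q i t = (\<Sum>j\<in>{1,2,3} - {i}. inverse_square_field (q j t - q i t))"

definition newton_solution :: "motion \<Rightarrow> motion \<Rightarrow> bool" where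
  "newton_solution q v \<longleftrightarrow> (\<forall>i\<in>{1,2,3}. \<forall>t. (q i has_vector_derivative v i t) (at t) \<and>
     (v i has_vector_derivative force q i t) (at t))"

definition collision_free_on :: "real set \<Rightarrow> motion \<Rightarrow> bool" where
  "collision_free_on S q \<longleftrightarrow> (\<forall>t\<in>S. \<forall>i\<in>{1,2,3}. \<forall>j\<in>{1,2,3}. i \<noteq> j \<longrightarrow> q i t \<noteq> q j t)"

abbreviation collision_free :: "motion \<Rightarrow> bool" where
  "collision_free \<equiv> collision_free_on UNIV"

lemma collision_free_on_subset: "collision_free_on S q \<Longrightarrow> T \<subseteq> S \<Longrightarrow> collision_free_on T q"
  unfolding collision_free_on_def by blast

lemma newton_solution_continuous:
  assumes "newton_solution q v" "i \<in> {1,2,3}"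
  shows "continuous_on S (q i)" "continuous_on S (v i)"
  using assms unfolding newton_solution_def
  by (meson continuous_at_imp_continuous_on has_vector_derivative_continuous)+

lemma force_sum_zero: "force q 1 t + force q 2 t + force q 3 t = 0"
  using inverse_square_field_minus[of "q 1 t - q 2 t"] inverse_square_field_minus[of "q 1 t - q 3 t"]
    inverse_square_field_minus[of "q 2 t - q 3 t"]
  by (simp add: force_def insert_Diff_if algebra_simps)

definition separated :: "real \<Rightarrow> motion \<Rightarrow> real \<Rightarrow> bool" where
  "separated r q t \<longleftrightarrow> (\<forall>i\<in>{1,2,3}. \<forall>j\<in>{1,2,3}. i \<noteq> j \<longrightarrow> r \<le> norm (q i t - q j t))"

lemma separated_mono: "separated r q t \<Longrightarrow> r' \<le> r \<Longrightarrow> separated r' q t"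
  unfolding separated_def by force

lemma collision_free_separated_on_compact:
  assumes cont: "\<And>i. i \<in> {1,2,3} \<Longrightarrow> continuous_on S (q i)"
    and "collision_free_on S q" "compact S"
  obtains r where "r > 0" "\<And>t. t \<in> S \<Longrightarrow> separated r q t"
proof -
  define g where "g t = min (norm (q 1 t - q 2 t)) (min (norm (q 1 t - q 3 t)) (norm (q 2 t - q 3 t)))" for t
  have "continuous_on S g"
    unfolding g_def using cont by (intro continuous_intros) auto
  moreover have "0 < g t" if "t \<in> S" for t
    using \<open>collision_free_on S q\<close> that unfolding g_def collision_free_on_def by auto
  ultimately obtain r where "r > 0" "\<forall>t\<in>S. r \<le> g t"
    using continuous_on_compact_bounded_below[OF \<open>compact S\<close>] by blast
  then show ?thesis
    using that unfolding g_def separated_def by (auto simp: norm_minus_commute)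
qed

lemma force_lipschitz:
  assumes "0 < r" and i: "i \<in> {1,2,3}"
    and "separated r q t" "separated r p t"
  shows "norm (force q i t - force p i t) \<le> 8/r^3 * (\<Sum>j\<in>{1,2,3}. norm (q j t - p j t))"
proof -
  define D where "D j = norm (q j t - p j t)" for j
  define A where "A = {1::nat,2,3} - {i}"
  have A: "finite A" "card A = 2" "i \<notin> A" "insert i A = {1,2,3}" using i by (auto simp: A_def)
  have "norm (force q i t - force p i t)
      \<le> (\<Sum>j\<in>A. norm (inverse_square_field (q j t - q i t) - inverse_square_field (p j t - p i t)))"
    unfolding force_def A_def[symmetric] sum_subtractf[symmetric] by (rule norm_sum)
  also have "\<dots> \<le> (\<Sum>j\<in>A. 4/r^3 * (D j + D i))"
  proof (rule sum_mono)
    fix j assume j: "j \<in> A"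
    have "r \<le> norm (q j t - q i t)" "r \<le> norm (p j t - p i t)"
      using \<open>separated r q t\<close> \<open>separated r p t\<close> i j by (auto simp: A_def separated_def)
    from inverse_square_field_lipschitz[OF this \<open>0 < r\<close>]
    have "norm (inverse_square_field (q j t - q i t) - inverse_square_field (p j t - p i t))
        \<le> 4/r^3 * norm ((q j t - p j t) - (q i t - p i t))"
      by (simp add: algebra_simps)
    also have "\<dots> \<le> 4/r^3 * (D j + D i)"
      unfolding D_def using \<open>0 < r\<close> by (intro mult_left_mono norm_triangle_ineq4) auto
    finally show "norm (inverse_square_field (q j t - q i t) - inverse_square_field (p j t - p i t))
        \<le> 4/r^3 * (D j + D i)" .
  qed
  also have "\<dots> = 4/r^3 * ((\<Sum>j\<in>A. D j) + 2 * D i)"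
    using A by (simp only: sum_distrib_left[symmetric] sum.distrib) simp
  also have "\<dots> \<le> 4/r^3 * (2 * (\<Sum>j\<in>{1,2,3}. D j))"
  proof -
    have "(\<Sum>j\<in>{1,2,3}. D j) = D i + (\<Sum>j\<in>A. D j)"
      using sum.insert[OF A(1,3), of D] A(4) by simp
    moreover have "0 \<le> (\<Sum>j\<in>A. D j)" by (simp add: D_def sum_nonneg)
    ultimately show ?thesis using \<open>0 < r\<close> by (intro mult_left_mono) auto
  qed
  finally show ?thesis by (simp add: D_def)
qed

section \<open>Uniqueness of collision-free solutions\<close>

lemma energy_derivative_bound:
  fixes x y z :: "'i \<Rightarrow> 'a::real_inner" and L :: real
  assumes "finite I" "0 \<le> L" "\<And>j. j \<in> I \<Longrightarrow> norm (z j) \<le> L * (\<Sum>k\<in>I. norm (x k))"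
  shows "\<bar>\<Sum>j\<in>I. 2 * inner (x j) (y j) + 2 * inner (y j) (z j)\<bar>
    \<le> (2 + real (card I) ^ 2 * L ^ 2) * (\<Sum>j\<in>I. norm (x j) ^ 2 + norm (y j) ^ 2)"
proof -
  have two_inner: "\<bar>2 * inner u w\<bar> \<le> norm u ^ 2 + norm w ^ 2" for u w :: 'a
  proof -
    have "\<bar>2 * inner u w\<bar> \<le> 2 * (norm u * norm w)" using Cauchy_Schwarz_ineq2[of u w] by simp
    also have "\<dots> \<le> norm u ^ 2 + norm w ^ 2" using sum_squares_ge_zero[of "norm u - norm w" 0]
      by (simp add: power2_eq_square algebra_simps)
    finally show ?thesis .
  qed
  let ?X = "\<Sum>j\<in>I. norm (x j) ^ 2" and ?E = "\<Sum>j\<in>I. norm (x j) ^ 2 + norm (y j) ^ 2"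
  have "(\<Sum>j\<in>I. norm (z j) ^ 2) \<le> (\<Sum>j\<in>I. L ^ 2 * (\<Sum>k\<in>I. norm (x k)) ^ 2)"
  proof (rule sum_mono)
    fix j assume "j \<in> I"
    from power_mono[OF assms(3)[OF this] norm_ge_zero, of 2]
    show "norm (z j) ^ 2 \<le> L ^ 2 * (\<Sum>k\<in>I. norm (x k)) ^ 2" by (simp add: power_mult_distrib)
  qed
  also have "\<dots> = card I * L ^ 2 * (\<Sum>k\<in>I. norm (x k)) ^ 2" by simp
  also have "\<dots> \<le> card I * L ^ 2 * (?X * card I)"
    by (intro mult_left_mono sum_squared_le_sum_of_squares) auto
  finally have z: "(\<Sum>j\<in>I. norm (z j) ^ 2) \<le> real (card I) ^ 2 * L ^ 2 * ?X"
    by (simp add: power2_eq_square mult_ac)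
  have XE: "?X \<le> ?E" by (intro sum_mono) simp
  have "(\<Sum>j\<in>I. norm (z j) ^ 2) \<le> real (card I) ^ 2 * L ^ 2 * ?E"
    using z mult_left_mono[OF XE, of "real (card I) ^ 2 * L ^ 2"] by simp
  moreover have "(\<Sum>j\<in>I. norm (y j) ^ 2) \<le> ?E" by (intro sum_mono) simp
  moreover have "\<bar>\<Sum>j\<in>I. 2 * inner (x j) (y j) + 2 * inner (y j) (z j)\<bar>
      \<le> (\<Sum>j\<in>I. (norm (x j) ^ 2 + norm (y j) ^ 2) + (norm (y j) ^ 2 + norm (z j) ^ 2))"
  proof (rule order_trans[OF sum_abs sum_mono])
    fix j
    show "\<bar>2 * inner (x j) (y j) + 2 * inner (y j) (z j)\<bar>
        \<le> (norm (x j) ^ 2 + norm (y j) ^ 2) + (norm (y j) ^ 2 + norm (z j) ^ 2)"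
      using two_inner[of "x j" "y j"] two_inner[of "y j" "z j"] by linarith
  qed
  ultimately show ?thesis
    unfolding sum.distrib by (simp add: algebra_simps)
qed

definition difference_energy :: "motion \<Rightarrow> motion \<Rightarrow> motion \<Rightarrow> motion \<Rightarrow> real \<Rightarrow> real" where
  "difference_energy q v p w s = (\<Sum>j\<in>{1,2,3}. norm (q j s - p j s) ^ 2 + norm (v j s - w j s) ^ 2)"

definition difference_energy_rate :: "motion \<Rightarrow> motion \<Rightarrow> motion \<Rightarrow> motion \<Rightarrow> real \<Rightarrow> real" where
  "difference_energy_rate q v p w s = (\<Sum>j\<in>{1,2,3}. 2 * inner (q j s - p j s) (v j s - w j s)
     + 2 * inner (v j s - w j s) (force q j s - force p j s))"

lemma has_real_derivative_difference_energy:
  assumes "newton_solution q v" "newton_solution p w"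
  shows "(difference_energy q v p w has_real_derivative difference_energy_rate q v p w s) (at s)"
proof -
  have "((\<lambda>s. q j s - p j s) has_vector_derivative v j s - w j s) (at s)"
    "((\<lambda>s. v j s - w j s) has_vector_derivative force q j s - force p j s) (at s)"
    if "j \<in> {1,2,3}" for j
    using assms that unfolding newton_solution_def by (auto intro!: derivative_eq_intros)
  then show ?thesis
    unfolding difference_energy_def[abs_def] difference_energy_rate_def
    by (intro DERIV_sum DERIV_add has_real_derivative_norm_power2) auto
qed

lemma difference_energy_derivative_bound:
  assumes "0 < r" "separated r q s" "separated r p s"
  shows "\<bar>difference_energy_rate q v p w s\<bar> \<le> (2 + 9 * (8/r^3) ^ 2) * difference_energy q v p w s"
proof -
  have "norm (force q j s - force p j s) \<le> 8/r^3 * (\<Sum>k\<in>{1,2,3}. norm (q k s - p k s))"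
    if "j \<in> {1,2,3}" for j
    using force_lipschitz[OF \<open>0 < r\<close> that assms(2,3)] .
  from energy_derivative_bound[of "{1,2,3}" "8/r^3", OF _ _ this] \<open>0 < r\<close>
  show ?thesis unfolding difference_energy_def difference_energy_rate_def by simp
qed

lemma newton_solution_unique:
  assumes sol_q: "newton_solution q v" and sol_p: "newton_solution p w"
    and "collision_free q" "collision_free p"
    and init: "\<forall>i\<in>{1,2,3}. q i t0 = p i t0 \<and> v i t0 = w i t0"
    and i: "i \<in> {1,2,3}"
  shows "q i t = p i t"
proof -
  define lo where "lo = min t0 t"
  define hi where "hi = max t0 t"
  have lohi: "lo \<le> t0" "t0 \<le> hi" "t \<in> {lo..hi}" by (auto simp: lo_def hi_def)
  obtain r1 where "r1 > 0" and r1: "\<And>s. s \<in> {lo..hi} \<Longrightarrow> separated r1 q s"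
    using collision_free_separated_on_compact[OF newton_solution_continuous(1)[OF sol_q]
        collision_free_on_subset[OF \<open>collision_free q\<close>] compact_Icc[of lo hi]] by blast
  obtain r2 where "r2 > 0" and r2: "\<And>s. s \<in> {lo..hi} \<Longrightarrow> separated r2 p s"
    using collision_free_separated_on_compact[OF newton_solution_continuous(1)[OF sol_p]
        collision_free_on_subset[OF \<open>collision_free p\<close>] compact_Icc[of lo hi]] by blast
  define r where "r = min r1 r2"
  have "r > 0" using \<open>r1 > 0\<close> \<open>r2 > 0\<close> by (simp add: r_def)
  have bound: "\<bar>difference_energy_rate q v p w s\<bar> \<le> (2 + 9 * (8/r^3) ^ 2) * difference_energy q v p w s"
    if "s \<in> {lo..hi}" for s
    using separated_mono[OF r1[OF that]] separated_mono[OF r2[OF that]]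
    by (intro difference_energy_derivative_bound[OF \<open>r > 0\<close>]) (simp_all add: r_def)
  have "difference_energy q v p w t0 = 0"
    using init unfolding difference_energy_def by simp
  from gronwall_zero[OF lohi(1,2) has_real_derivative_difference_energy[OF sol_q sol_p] bound _ this lohi(3)]
  have "difference_energy q v p w t = 0"
    by (simp add: difference_energy_def sum_nonneg)
  then have "\<forall>j\<in>{1::nat,2,3}. norm (q j t - p j t) ^ 2 + norm (v j t - w j t) ^ 2 = 0"
    unfolding difference_energy_def by (subst (asm) sum_nonneg_eq_0_iff) auto
  then have "norm (q i t - p i t) ^ 2 + norm (v i t - w i t) ^ 2 = 0" using i by blast
  then show ?thesis by (simp add: add_nonneg_eq_0_iff)
qed

lemma newton_solution_total_velocity_zero:
  assumes sol: "newton_solution q v" and centred: "\<forall>t\<in>{0..1}. q 1 t + q 2 t + q 3 t = 0"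
  shows "v 1 t + v 2 t + v 3 t = 0"
proof -
  have "((\<lambda>s. v 1 s + v 2 s + v 3 s) has_vector_derivative 0) (at s)" for s
    using sol force_sum_zero[of q s] unfolding newton_solution_def by (auto intro!: derivative_eq_intros)
  then obtain c where c: "\<And>s. v 1 s + v 2 s + v 3 s = c"
    using has_derivative_zero_constant[of UNIV "\<lambda>s. v 1 s + v 2 s + v 3 s"]
    by (auto simp: has_vector_derivative_def)
  have "((\<lambda>s. q 1 s + q 2 s + q 3 s - s *\<^sub>R c) has_vector_derivative 0) (at s)" for s
    using sol c[of s] unfolding newton_solution_def by (auto intro!: derivative_eq_intros)
  then obtain d where d: "\<And>s. q 1 s + q 2 s + q 3 s - s *\<^sub>R c = d"
    using has_derivative_zero_constant[of UNIV "\<lambda>s. q 1 s + q 2 s + q 3 s - s *\<^sub>R c"]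
    by (auto simp: has_vector_derivative_def)
  have "c = 0" using d[of 0] d[of 1] centred by auto
  then show ?thesis using c by simp
qed

lemma has_vector_derivative_reflect_matrix:
  fixes M :: "real^'n^'m"
  assumes "(f has_vector_derivative f') (at (a - t))"
  shows "((\<lambda>t. M *v f (a - t)) has_vector_derivative - (M *v f')) (at t)"
proof -
  have "((\<lambda>t. a - t) has_vector_derivative -1) (at t)" by (auto intro!: derivative_eq_intros)
  from vector_diff_chain_at[OF this, of f f'] assms
  have "((\<lambda>t. f (a - t)) has_vector_derivative - f') (at t)" by (simp add: o_def)
  from bounded_linear.has_vector_derivative[OF matrix_vector_mul_bounded_linear this]
  show ?thesis by (simp add: vec.neg)
qed

lemma inverse_square_field_isometry:
  fixes M :: "real^'n^'n"
  assumes "\<And>x. norm (M *v x) = norm x"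
  shows "inverse_square_field (M *v x - M *v y) = M *v inverse_square_field (x - y)"
  by (simp add: inverse_square_field_def assms matrix_vector_mult_scaleR flip: matrix_vector_mult_diff_distrib)

lemma newton_solution_symmetry:
  fixes M :: "real^2^2" and \<sigma> :: "nat \<Rightarrow> nat"
  assumes sol: "newton_solution q v" and isometry: "\<And>x. norm (M *v x) = norm x"
    and perm: "bij_betw \<sigma> {1,2,3} {1,2,3}"
  shows "newton_solution (\<lambda>i t. M *v q (\<sigma> i) (a - t)) (\<lambda>i t. - (M *v v (\<sigma> i) (a - t)))"
  unfolding newton_solution_def
proof (intro ballI allI conjI)
  fix i t assume i: "i \<in> {1::nat,2,3}"
  then have "\<sigma> i \<in> {1,2,3}" using perm by (auto dest: bij_betwE)
  then have q': "(q (\<sigma> i) has_vector_derivative v (\<sigma> i) (a - t)) (at (a - t))"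
   and v': "(v (\<sigma> i) has_vector_derivative force q (\<sigma> i) (a - t)) (at (a - t))"
    using sol unfolding newton_solution_def by auto
  show "((\<lambda>t. M *v q (\<sigma> i) (a - t)) has_vector_derivative - (M *v v (\<sigma> i) (a - t))) (at t)"
    by (rule has_vector_derivative_reflect_matrix[OF q'])
  have "force (\<lambda>i t. M *v q (\<sigma> i) (a - t)) i t
      = (\<Sum>j\<in>{1,2,3} - {i}. M *v inverse_square_field (q (\<sigma> j) (a - t) - q (\<sigma> i) (a - t)))"
    unfolding force_def inverse_square_field_isometry[OF isometry] ..
  also have "\<dots> = M *v (\<Sum>k\<in>\<sigma> ` ({1,2,3} - {i}). inverse_square_field (q k (a - t) - q (\<sigma> i) (a - t)))"
  proof -
    have "inj_on \<sigma> ({1,2,3} - {i})" using perm by (auto simp: bij_betw_def intro: inj_on_subset)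
    then show ?thesis by (simp only: vec.sum sum.reindex o_def)
  qed
  also have "\<sigma> ` ({1,2,3} - {i}) = {1,2,3} - {\<sigma> i}"
    using perm i inj_on_image_set_diff[of \<sigma> "{1,2,3}" "{1,2,3}" "{i}"] by (auto simp: bij_betw_def)
  finally have "force (\<lambda>i t. M *v q (\<sigma> i) (a - t)) i t = M *v force q (\<sigma> i) (a - t)"
    unfolding force_def .
  with has_vector_derivative_minus[OF has_vector_derivative_reflect_matrix[OF v', of M]]
  show "((\<lambda>t. - (M *v v (\<sigma> i) (a - t))) has_vector_derivative force (\<lambda>i t. M *v q (\<sigma> i) (a - t)) i t) (at t)"
    by simp
qed

lemma collision_free_symmetry:
  fixes M :: "real^2^2" and \<sigma> :: "nat \<Rightarrow> nat"
  assumes "collision_free q" and isometry: "\<And>x. norm (M *v x) = norm x"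
    and perm: "bij_betw \<sigma> {1,2,3} {1,2,3}"
  shows "collision_free (\<lambda>i t. M *v q (\<sigma> i) (a - t))"
  unfolding collision_free_on_def
proof (intro allI ballI impI)
  fix t i j assume ij: "i \<in> {1::nat,2,3}" "j \<in> {1::nat,2,3}" "i \<noteq> j"
  then have "\<sigma> i \<in> {1,2,3}" "\<sigma> j \<in> {1,2,3}" "\<sigma> i \<noteq> \<sigma> j"
    using perm by (auto simp: bij_betw_def inj_on_def)
  then have "norm (M *v (q (\<sigma> i) (a - t) - q (\<sigma> j) (a - t))) \<noteq> 0"
    using \<open>collision_free q\<close> unfolding collision_free_on_def isometry by auto
  then show "M *v q (\<sigma> i) (a - t) \<noteq> M *v q (\<sigma> j) (a - t)"
    by (simp add: matrix_vector_mult_diff_distrib)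
qed

section \<open>First variation of the action\<close>

definition perturb :: "motion \<Rightarrow> motion \<Rightarrow> real \<Rightarrow> motion" where
  "perturb q \<phi> \<epsilon> = (\<lambda>i t. q i t + \<epsilon> *\<^sub>R \<phi> i t)"

definition lagrangian :: "motion \<Rightarrow> motion \<Rightarrow> real \<Rightarrow> real" where
  "lagrangian q v t = (1/2) * (\<Sum>i\<in>{1,2,3}. norm (v i t) ^ 2)
     + 1 / norm (q 1 t - q 2 t) + 1 / norm (q 1 t - q 3 t) + 1 / norm (q 2 t - q 3 t)"

definition lagrangian_variation :: "motion \<Rightarrow> motion \<Rightarrow> motion \<Rightarrow> motion \<Rightarrow> real \<Rightarrow> real" where
  "lagrangian_variation q v \<phi> \<phi>' t = (\<Sum>i\<in>{1,2,3}. inner (v i t) (\<phi>' i t))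
     - inner (q 1 t - q 2 t) (\<phi> 1 t - \<phi> 2 t) / norm (q 1 t - q 2 t) ^ 3
     - inner (q 1 t - q 3 t) (\<phi> 1 t - \<phi> 3 t) / norm (q 1 t - q 3 t) ^ 3
     - inner (q 2 t - q 3 t) (\<phi> 2 t - \<phi> 3 t) / norm (q 2 t - q 3 t) ^ 3"

lemma collision_free_onD:
  "collision_free_on S q \<Longrightarrow> t \<in> S \<Longrightarrow>
    q 1 t - q 2 t \<noteq> 0 \<and> q 1 t - q 3 t \<noteq> 0 \<and> q 2 t - q 3 t \<noteq> 0"
  unfolding collision_free_on_def by force

lemma lagrangian_nonneg: "0 \<le> lagrangian q v t"
  unfolding lagrangian_def by (simp add: sum_nonneg)

lemma continuous_on_lagrangian:
  assumes "\<And>i. i \<in> {1,2,3} \<Longrightarrow> continuous_on S (q i)" "\<And>i. i \<in> {1,2,3} \<Longrightarrow> continuous_on S (v i)"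
    and "collision_free_on S q"
  shows "continuous_on S (lagrangian q v)"
  unfolding lagrangian_def using assms collision_free_onD[OF assms(3)]
  by (intro continuous_intros continuous_on_sum) auto

lemma action_eq_integral_lagrangian:
  assumes deriv: "\<And>i t. i \<in> {1,2,3} \<Longrightarrow> (q i has_vector_derivative v i t) (at t)"
    and cont: "\<And>i. i \<in> {1,2,3} \<Longrightarrow> continuous_on {0..1} (v i)"
    and "collision_free_on {0..1} q"
  shows "action q = ennreal (integral {0..1} (lagrangian q v))"
proof -
  have "continuous_on {0..1} (q i)" if "i \<in> {1,2,3}" for i
    using deriv[OF that] by (meson continuous_at_imp_continuous_on has_vector_derivative_continuous)
  from continuous_on_lagrangian[OF this cont \<open>collision_free_on {0..1} q\<close>]
  have integral: "(lagrangian q v has_integral integral {0..1} (lagrangian q v)) {0..1}"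
    by (intro integrable_integral integrable_continuous_interval)
  have "ennreal ((1/2) * (\<Sum>i\<in>{1,2,3}. (norm (vector_derivative (q i) (at t)))^2))
      + pairpot (q 1 t) (q 2 t) + pairpot (q 1 t) (q 3 t) + pairpot (q 2 t) (q 3 t)
      = ennreal (lagrangian q v t)" if "t \<in> {0..1}" for t
  proof -
    have "vector_derivative (q i) (at t) = v i t" if "i \<in> {1,2,3}" for i
      using deriv[OF that] by (rule vector_derivative_at)
    moreover have "q 1 t \<noteq> q 2 t" "q 1 t \<noteq> q 3 t" "q 2 t \<noteq> q 3 t"
      using collision_free_onD[OF \<open>collision_free_on {0..1} q\<close> that] by auto
    ultimately show ?thesis
      unfolding lagrangian_def pairpot_def by (simp add: ennreal_plus[symmetric] sum_nonneg del: ennreal_plus)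
  qed
  then have "action q = (\<integral>\<^sup>+ t. ennreal (lagrangian q v t) * indicator {0..1} t \<partial>lborel)"
    unfolding action_def by (intro nn_integral_cong) (simp split: split_indicator)
  also have "\<dots> = ennreal (integral {0..1} (lagrangian q v))"
    by (rule nn_integral_has_integral_lebesgue'[OF lagrangian_nonneg integral])
  finally show ?thesis .
qed

lemma has_real_derivative_lagrangian_perturb:
  assumes "collision_free_on {t} (perturb q \<phi> \<epsilon>)"
  shows "((\<lambda>e. lagrangian (perturb q \<phi> e) (perturb v \<phi>' e) t) has_real_derivative
      lagrangian_variation (perturb q \<phi> \<epsilon>) (perturb v \<phi>' \<epsilon>) \<phi> \<phi>' t) (at \<epsilon> within U)"
proof -
  have kinetic: "((\<lambda>e. (1/2) * (\<Sum>i\<in>{1,2,3}. norm (v i t + e *\<^sub>R \<phi>' i t) ^ 2)) has_real_derivative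
      (\<Sum>i\<in>{1,2,3}. inner (v i t + \<epsilon> *\<^sub>R \<phi>' i t) (\<phi>' i t))) (at \<epsilon> within U)"
  proof -
    have "((\<lambda>e. norm (v i t + e *\<^sub>R \<phi>' i t) ^ 2) has_real_derivative
        2 * inner (v i t + \<epsilon> *\<^sub>R \<phi>' i t) (\<phi>' i t)) (at \<epsilon> within U)" for i
      by (rule has_real_derivative_norm_power2) (auto intro!: derivative_eq_intros)
    then have "((\<lambda>e. \<Sum>i\<in>{1,2,3}. norm (v i t + e *\<^sub>R \<phi>' i t) ^ 2) has_real_derivative
        (\<Sum>i\<in>{1,2,3}. 2 * inner (v i t + \<epsilon> *\<^sub>R \<phi>' i t) (\<phi>' i t))) (at \<epsilon> within U)"
      by (intro DERIV_sum)
    from DERIV_cmult[OF this, of "1/2"] show ?thesis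
      by (rule DERIV_cong) (simp add: sum_distrib_left)
  qed
  have potential: "((\<lambda>e. 1 / norm ((q i t + e *\<^sub>R \<phi> i t) - (q j t + e *\<^sub>R \<phi> j t))) has_real_derivative
      - inner ((q i t + \<epsilon> *\<^sub>R \<phi> i t) - (q j t + \<epsilon> *\<^sub>R \<phi> j t)) (\<phi> i t - \<phi> j t)
        / norm ((q i t + \<epsilon> *\<^sub>R \<phi> i t) - (q j t + \<epsilon> *\<^sub>R \<phi> j t)) ^ 3) (at \<epsilon> within U)"
    if "(i, j) \<in> {(1,2),(1,3),(2,3)}" for i j
  proof (rule has_real_derivative_inverse_norm)
    show "((\<lambda>e. (q i t + e *\<^sub>R \<phi> i t) - (q j t + e *\<^sub>R \<phi> j t)) has_vector_derivative \<phi> i t - \<phi> j t)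
        (at \<epsilon> within U)"
      by (auto intro!: derivative_eq_intros)
    show "(q i t + \<epsilon> *\<^sub>R \<phi> i t) - (q j t + \<epsilon> *\<^sub>R \<phi> j t) \<noteq> 0"
      using assms that unfolding collision_free_on_def perturb_def by auto
  qed
  have "(1, 2) \<in> {(1::nat, 2::nat), (1, 3), (2, 3)}" "(1, 3) \<in> {(1::nat, 2::nat), (1, 3), (2, 3)}"
    "(2, 3) \<in> {(1::nat, 2::nat), (1, 3), (2, 3)}" by simp_all
  from DERIV_add[OF DERIV_add[OF DERIV_add[OF kinetic potential[OF this(1)]] potential[OF this(2)]]
      potential[OF this(3)]]
  show ?thesis
    unfolding lagrangian_def lagrangian_variation_def perturb_def by (rule DERIV_cong) simp
qed

lemma has_real_derivative_integral_lagrangian_perturb: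
  assumes cont: "\<And>i. i \<in> {1,2,3} \<Longrightarrow> continuous_on {0..1} (q i)"
      "\<And>i. i \<in> {1,2,3} \<Longrightarrow> continuous_on {0..1} (v i)"
      "\<And>i. i \<in> {1,2,3} \<Longrightarrow> continuous_on {0..1} (\<phi> i)"
      "\<And>i. i \<in> {1,2,3} \<Longrightarrow> continuous_on {0..1} (\<phi>' i)"
    and "e > 0" and free: "\<And>\<epsilon>. \<bar>\<epsilon>\<bar> < e \<Longrightarrow> collision_free_on {0..1} (perturb q \<phi> \<epsilon>)"
  shows "((\<lambda>\<epsilon>. integral {0..1} (lagrangian (perturb q \<phi> \<epsilon>) (perturb v \<phi>' \<epsilon>))) has_real_derivative
      integral {0..1} (lagrangian_variation q v \<phi> \<phi>')) (at 0)"
proof -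
  let ?U = "ball 0 e :: real set"
  have U: "\<bar>\<epsilon>\<bar> < e" if "\<epsilon> \<in> ?U" for \<epsilon> using that by simp
  have snd_cont: "continuous_on (?U \<times> {0..1}) (\<lambda>z. f (snd z))" if "continuous_on {0..1} f" for f :: "real \<Rightarrow> real^2"
    by (rule continuous_on_compose2[OF that continuous_on_snd]) auto
  have "continuous_on (?U \<times> cbox 0 1)
      (\<lambda>(\<epsilon>, t). lagrangian_variation (perturb q \<phi> \<epsilon>) (perturb v \<phi>' \<epsilon>) \<phi> \<phi>' t)"
    unfolding split_beta' lagrangian_variation_def perturb_def cbox_interval
    using collision_free_onD[OF free[OF U]]
    by (intro continuous_intros snd_cont cont) (auto simp: mem_Times_iff perturb_def)
  then have "((\<lambda>\<epsilon>. integral (cbox 0 1) (lagrangian (perturb q \<phi> \<epsilon>) (perturb v \<phi>' \<epsilon>))) has_real_derivative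
      integral (cbox 0 1) (lagrangian_variation (perturb q \<phi> 0) (perturb v \<phi>' 0) \<phi> \<phi>')) (at 0 within ?U)"
  proof (rule leibniz_rule_field_derivative[rotated 2])
    show "((\<lambda>\<epsilon>. lagrangian (perturb q \<phi> \<epsilon>) (perturb v \<phi>' \<epsilon>) t) has_real_derivative
        lagrangian_variation (perturb q \<phi> \<epsilon>) (perturb v \<phi>' \<epsilon>) \<phi> \<phi>' t) (at \<epsilon> within ?U)"
      if "\<epsilon> \<in> ?U" "t \<in> cbox 0 1" for \<epsilon> t
      using free[OF U[OF that(1)]] that(2)
      by (intro has_real_derivative_lagrangian_perturb) (auto simp: collision_free_on_def)
    show "lagrangian (perturb q \<phi> \<epsilon>) (perturb v \<phi>' \<epsilon>) integrable_on cbox 0 1" if "\<epsilon> \<in> ?U" for \<epsilon>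
      unfolding cbox_interval using cont free[OF U[OF that]] unfolding perturb_def
      by (intro integrable_continuous_interval continuous_on_lagrangian continuous_intros) auto
  qed (use \<open>e > 0\<close> in auto)
  moreover have "perturb q \<phi> 0 = q" "perturb v \<phi>' 0 = v" by (simp_all add: perturb_def)
  moreover have "at (0::real) within ?U = at 0" by (rule at_within_open) (use \<open>e > 0\<close> in auto)
  ultimately show ?thesis by (simp add: cbox_interval)
qed

lemma collision_free_perturb:
  assumes cont_q: "\<And>i. i \<in> {1,2,3} \<Longrightarrow> continuous_on {0..1} (q i)"
    and cont_\<phi>: "\<And>i. i \<in> {1,2,3} \<Longrightarrow> continuous_on {0..1} (\<phi> i)"
    and "collision_free_on {0..1} q"
  shows "\<exists>e>0. \<forall>\<epsilon>. \<bar>\<epsilon>\<bar> < e \<longrightarrow> collision_free_on {0..1} (perturb q \<phi> \<epsilon>)"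
proof -
  obtain r where "r > 0" and r: "\<And>t. t \<in> {0..1} \<Longrightarrow> separated r q t"
    using collision_free_separated_on_compact[OF cont_q \<open>collision_free_on {0..1} q\<close> compact_Icc] by blast
  define h where "h t = norm (\<phi> 1 t) + norm (\<phi> 2 t) + norm (\<phi> 3 t)" for t
  have "continuous_on {0..1} h" unfolding h_def using cont_\<phi> by (intro continuous_intros) auto
  then obtain s where "s \<in> {0..1}" and max: "\<And>t. t \<in> {0..1} \<Longrightarrow> h t \<le> h s"
    using continuous_attains_sup[OF compact_Icc, of 0 1 h] by auto
  define B where "B = h s"
  have "0 \<le> B" by (simp add: B_def h_def)
  have bound: "norm (\<phi> i t - \<phi> j t) \<le> B" if "t \<in> {0..1}" "i \<in> {1,2,3}" "j \<in> {1,2,3}" "i \<noteq> j" for i j t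
  proof -
    have "norm (\<phi> i t - \<phi> j t) \<le> h t"
      using that norm_triangle_ineq4[of "\<phi> i t" "\<phi> j t"] unfolding h_def
      by (auto; smt (verit) norm_ge_zero)
    with max[OF that(1)] show ?thesis by (simp add: B_def)
  qed
  show ?thesis
  proof (intro exI conjI allI impI)
    show "r / (B + 1) > 0" using \<open>r > 0\<close> \<open>0 \<le> B\<close> by simp
    fix \<epsilon> :: real assume small: "\<bar>\<epsilon>\<bar> < r / (B + 1)"
    show "collision_free_on {0..1} (perturb q \<phi> \<epsilon>)"
      unfolding collision_free_on_def perturb_def
    proof (intro ballI impI)
      fix t :: real and i j assume tij: "t \<in> {0..1}" "i \<in> {1::nat,2,3}" "j \<in> {1::nat,2,3}" "i \<noteq> j"
      have "\<bar>\<epsilon>\<bar> * norm (\<phi> i t - \<phi> j t) \<le> \<bar>\<epsilon>\<bar> * (B + 1)"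
        using bound[OF tij] by (intro mult_left_mono) auto
      also have "\<dots> < r" using small \<open>0 \<le> B\<close> by (simp add: field_simps)
      also have "r \<le> norm (q i t - q j t)" using r[OF tij(1)] tij(2-4) unfolding separated_def by blast
      also have "\<dots> = norm (((q i t + \<epsilon> *\<^sub>R \<phi> i t) - (q j t + \<epsilon> *\<^sub>R \<phi> j t)) - \<epsilon> *\<^sub>R (\<phi> i t - \<phi> j t))"
        by (simp add: algebra_simps)
      also have "\<dots> \<le> norm ((q i t + \<epsilon> *\<^sub>R \<phi> i t) - (q j t + \<epsilon> *\<^sub>R \<phi> j t)) + \<bar>\<epsilon>\<bar> * norm (\<phi> i t - \<phi> j t)"
        by (metis norm_scaleR norm_triangle_ineq4)
      finally show "q i t + \<epsilon> *\<^sub>R \<phi> i t \<noteq> q j t + \<epsilon> *\<^sub>R \<phi> j t" by auto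
    qed
  qed
qed

lemma inverse_square_field_work:
  fixes x1 x2 x3 f1 f2 f3 :: "'a::real_inner"
  shows "inner (inverse_square_field (x2 - x1) + inverse_square_field (x3 - x1)) f1
      + inner (inverse_square_field (x1 - x2) + inverse_square_field (x3 - x2)) f2
      + inner (inverse_square_field (x1 - x3) + inverse_square_field (x2 - x3)) f3
    = - inner (x1 - x2) (f1 - f2) / norm (x1 - x2) ^ 3 - inner (x1 - x3) (f1 - f3) / norm (x1 - x3) ^ 3
      - inner (x2 - x3) (f2 - f3) / norm (x2 - x3) ^ 3"
  unfolding inverse_square_field_def
  by (simp add: inner_add_left inner_diff_left inner_diff_right norm_minus_commute[of x2 x1]
      norm_minus_commute[of x3 x1] norm_minus_commute[of x3 x2] divide_inverse algebra_simps)

lemma sum_inner_force: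
  "(\<Sum>i\<in>{1,2,3}. inner (force q i t) (\<phi> i)) =
    - inner (q 1 t - q 2 t) (\<phi> 1 - \<phi> 2) / norm (q 1 t - q 2 t) ^ 3
    - inner (q 1 t - q 3 t) (\<phi> 1 - \<phi> 3) / norm (q 1 t - q 3 t) ^ 3
    - inner (q 2 t - q 3 t) (\<phi> 2 - \<phi> 3) / norm (q 2 t - q 3 t) ^ 3"
proof -
  have "force q 1 t = inverse_square_field (q 2 t - q 1 t) + inverse_square_field (q 3 t - q 1 t)"
    "force q 2 t = inverse_square_field (q 1 t - q 2 t) + inverse_square_field (q 3 t - q 2 t)"
    "force q 3 t = inverse_square_field (q 1 t - q 3 t) + inverse_square_field (q 2 t - q 3 t)"
    by (simp_all add: force_def insert_Diff_if)
  moreover have "(\<Sum>i\<in>{1::nat,2,3}. f i) = f 1 + f 2 + f 3" for f :: "nat \<Rightarrow> real"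
    by (simp add: add.assoc)
  ultimately show ?thesis by (simp only: inverse_square_field_work)
qed

lemma has_real_derivative_momentum_pairing:
  assumes sol: "newton_solution q v" and \<phi>: "\<And>i. i \<in> {1,2,3} \<Longrightarrow> (\<phi> i has_vector_derivative \<phi>' i t) (at t)"
  shows "((\<lambda>t. \<Sum>i\<in>{1,2,3}. inner (v i t) (\<phi> i t)) has_real_derivative lagrangian_variation q v \<phi> \<phi>' t) (at t)"
proof -
  have "((\<lambda>t. \<Sum>i\<in>{1,2,3}. inner (v i t) (\<phi> i t)) has_real_derivative
      (\<Sum>i\<in>{1,2,3}. inner (force q i t) (\<phi> i t) + inner (v i t) (\<phi>' i t))) (at t)"
    using sol \<phi> unfolding newton_solution_def by (intro DERIV_sum has_real_derivative_inner) auto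
  then show ?thesis
    unfolding lagrangian_variation_def sum.distrib sum_inner_force[of q t "\<lambda>i. \<phi> i t"]
    by (rule DERIV_cong) simp
qed

lemma first_variation_vanishes:
  assumes q: "\<And>i t. i \<in> {1,2,3} \<Longrightarrow> (q i has_vector_derivative v i t) (at t)"
    and cont_v: "\<And>i. i \<in> {1,2,3} \<Longrightarrow> continuous_on {0..1} (v i)"
    and free: "collision_free_on {0..1} q"
    and \<phi>: "\<And>i t. i \<in> {1,2,3} \<Longrightarrow> (\<phi> i has_vector_derivative \<phi>' i t) (at t)"
    and cont_\<phi>': "\<And>i. i \<in> {1,2,3} \<Longrightarrow> continuous_on {0..1} (\<phi>' i)"
    and "\<delta> > 0" and minimal: "\<And>\<epsilon>. \<bar>\<epsilon>\<bar> < \<delta> \<Longrightarrow> action q \<le> action (perturb q \<phi> \<epsilon>)"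
  shows "integral {0..1} (lagrangian_variation q v \<phi> \<phi>') = 0"
proof -
  have cont: "continuous_on {0..1} (q i)" "continuous_on {0..1} (\<phi> i)" if "i \<in> {1,2,3}" for i
    using q[OF that] \<phi>[OF that]
    by (meson continuous_at_imp_continuous_on has_vector_derivative_continuous)+
  have "\<exists>e>0. \<forall>\<epsilon>. \<bar>\<epsilon>\<bar> < e \<longrightarrow> collision_free_on {0..1} (perturb q \<phi> \<epsilon>)"
    using cont(1) cont(2) free by (rule collision_free_perturb)
  then obtain e1 where "e1 > 0" and "\<forall>\<epsilon>. \<bar>\<epsilon>\<bar> < e1 \<longrightarrow> collision_free_on {0..1} (perturb q \<phi> \<epsilon>)"
    by blast
  then have free_e1: "collision_free_on {0..1} (perturb q \<phi> \<epsilon>)" if "\<bar>\<epsilon>\<bar> < e1" for \<epsilon>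
    using that by blast
  define e where "e = min \<delta> e1"
  define A where "A \<epsilon> = integral {0..1} (lagrangian (perturb q \<phi> \<epsilon>) (perturb v \<phi>' \<epsilon>))" for \<epsilon>
  have cont_perturb: "continuous_on {0..1} (perturb q \<phi> \<epsilon> i)" "continuous_on {0..1} (perturb v \<phi>' \<epsilon> i)"
    if "i \<in> {1,2,3}" for i \<epsilon>
    unfolding perturb_def using cont[OF that] cont_v[OF that] cont_\<phi>'[OF that] by (auto intro!: continuous_intros)
  have A_nonneg: "0 \<le> A \<epsilon>" if "\<bar>\<epsilon>\<bar> < e1" for \<epsilon>
  proof -
    from continuous_on_lagrangian[OF cont_perturb[of _ \<epsilon>] free_e1[OF that]]
    show ?thesis unfolding A_def
      by (rule integral_nonneg[OF integrable_continuous_interval lagrangian_nonneg])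
  qed
  have action: "action (perturb q \<phi> \<epsilon>) = ennreal (A \<epsilon>)" if "\<bar>\<epsilon>\<bar> < e1" for \<epsilon>
    unfolding A_def
  proof (rule action_eq_integral_lagrangian[OF _ _ free_e1[OF that]])
    show "(perturb q \<phi> \<epsilon> i has_vector_derivative perturb v \<phi>' \<epsilon> i t) (at t)" if "i \<in> {1,2,3}" for i t
      using q[OF that] \<phi>[OF that] unfolding perturb_def by (auto intro!: derivative_eq_intros)
    show "continuous_on {0..1} (perturb v \<phi>' \<epsilon> i)" if "i \<in> {1,2,3}" for i
      by (rule cont_perturb(2)[OF that])
  qed
  have "(A has_real_derivative integral {0..1} (lagrangian_variation q v \<phi> \<phi>')) (at 0)"
    unfolding A_def
    by (rule has_real_derivative_integral_lagrangian_perturb[OF cont(1) cont_v cont(2) cont_\<phi>' \<open>e1 > 0\<close> free_e1])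
  then show ?thesis
  proof (rule DERIV_local_min)
    show "0 < e" using \<open>\<delta> > 0\<close> \<open>e1 > 0\<close> by (simp add: e_def)
    show "\<forall>\<epsilon>. \<bar>0 - \<epsilon>\<bar> < e \<longrightarrow> A 0 \<le> A \<epsilon>"
    proof (intro allI impI)
      fix \<epsilon> :: real assume "\<bar>0 - \<epsilon>\<bar> < e"
      then have "\<bar>\<epsilon>\<bar> < \<delta>" "\<bar>\<epsilon>\<bar> < e1" by (auto simp: e_def)
      have "perturb q \<phi> 0 = q" by (simp add: perturb_def)
      then have "ennreal (A 0) \<le> ennreal (A \<epsilon>)"
        using action[of 0] action[OF \<open>\<bar>\<epsilon>\<bar> < e1\<close>] minimal[OF \<open>\<bar>\<epsilon>\<bar> < \<delta>\<close>] \<open>e1 > 0\<close> by simp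
      with A_nonneg[OF \<open>\<bar>\<epsilon>\<bar> < e1\<close>] show "A 0 \<le> A \<epsilon>" by (simp add: ennreal_le_iff)
    qed
  qed
qed

lemma first_variation_boundary:
  assumes sol: "newton_solution q v" and free: "collision_free_on {0..1} q"
    and \<phi>: "\<And>i t. i \<in> {1,2,3} \<Longrightarrow> (\<phi> i has_vector_derivative \<phi>' i t) (at t)"
    and cont_\<phi>': "\<And>i. i \<in> {1,2,3} \<Longrightarrow> continuous_on {0..1} (\<phi>' i)"
    and "\<delta> > 0" and minimal: "\<And>\<epsilon>. \<bar>\<epsilon>\<bar> < \<delta> \<Longrightarrow> action q \<le> action (perturb q \<phi> \<epsilon>)"
  shows "(\<Sum>i\<in>{1,2,3}. inner (v i 1) (\<phi> i 1)) = (\<Sum>i\<in>{1,2,3}. inner (v i 0) (\<phi> i 0))"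
proof -
  have "integral {0..1} (lagrangian_variation q v \<phi> \<phi>') = 0"
  proof (rule first_variation_vanishes[OF _ _ free \<phi> cont_\<phi>' \<open>\<delta> > 0\<close> minimal])
    show "(q i has_vector_derivative v i t) (at t)" if "i \<in> {1,2,3}" for i t
      using sol that unfolding newton_solution_def by blast
    show "continuous_on {0..1} (v i)" if "i \<in> {1,2,3}" for i
      by (rule newton_solution_continuous(2)[OF sol that])
  qed
  moreover have "(lagrangian_variation q v \<phi> \<phi>' has_integral
      (\<Sum>i\<in>{1,2,3}. inner (v i 1) (\<phi> i 1)) - (\<Sum>i\<in>{1,2,3}. inner (v i 0) (\<phi> i 0))) {0..1}"
  proof (rule fundamental_theorem_of_calculus)
    fix t :: real
    have "((\<lambda>t. \<Sum>i\<in>{1,2,3}. inner (v i t) (\<phi> i t)) has_real_derivative lagrangian_variation q v \<phi> \<phi>' t) (at t)"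
      by (rule has_real_derivative_momentum_pairing[OF sol \<phi>])
    then show "((\<lambda>t. \<Sum>i\<in>{1,2,3}. inner (v i t) (\<phi> i t)) has_vector_derivative lagrangian_variation q v \<phi> \<phi>' t)
        (at t within {0..1})"
      unfolding has_real_derivative_iff_has_vector_derivative by (rule has_vector_derivative_at_within)
  qed simp
  ultimately show ?thesis by (simp add: integral_unique)
qed

section \<open>Natural boundary conditions of the minimizer\<close>

lemma vec2_eq_iff: "(x::real^2) = y \<longleftrightarrow> x$1 = y$1 \<and> x$2 = y$2"
  by (simp add: vec_eq_iff forall_2)

lemma inner_vec2: "inner (x::real^2) y = x$1 * y$1 + x$2 * y$2"
  by (simp add: inner_vec_def sum_2)

lemma Qs1_add_scaleR: "Qs1 a1 a2 i + \<epsilon> *\<^sub>R Qs1 d1 d2 i = Qs1 (a1 + \<epsilon> * d1) (a2 + \<epsilon> * d2) i"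
  by (simp add: Qs1_def vec2_eq_iff algebra_simps)

lemma Qe1_add_scaleR: "Qe1 b1 b2 i + \<epsilon> *\<^sub>R Qe1 d1 d2 i = Qe1 (b1 + \<epsilon> * d1) (b2 + \<epsilon> * d2) i"
  by (simp add: Qe1_def vec2_eq_iff algebra_simps)

lemma Qs1_sum: "Qs1 a1 a2 1 + Qs1 a1 a2 2 + Qs1 a1 a2 3 = 0"
  by (simp add: Qs1_def vec2_eq_iff)

lemma Qe1_sum: "Qe1 b1 b2 1 + Qe1 b1 b2 2 + Qe1 b1 b2 3 = 0"
  by (simp add: Qe1_def vec2_eq_iff)

lemma H1_01_if_C1:
  assumes deriv: "\<And>t. (f has_vector_derivative f' t) (at t)" and cont: "continuous_on UNIV f'"
  shows "H1_01 f"
  unfolding H1_01_def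
proof (intro exI conjI ballI)
  show "f' \<in> borel_measurable lborel"
    unfolding measurable_lborel2 by (rule borel_measurable_continuous_onI[OF cont])
  show "set_integrable lborel {0..1} (\<lambda>t. (norm (f' t))^2)"
    unfolding set_integrable_def
    by (rule borel_integrable_compact) (auto intro!: continuous_intros continuous_on_subset[OF cont])
  fix t :: real assume t: "t \<in> {0..1}"
  have "set_integrable lborel {0..t} f'"
    unfolding set_integrable_def by (rule borel_integrable_compact) (auto intro!: continuous_on_subset[OF cont])
  then have "(LINT s:{0..t}|lborel. f' s) = integral {0..t} f'"
    by (rule set_borel_integral_eq_integral(2))
  also have "\<dots> = f t - f 0"
    using t by (intro integral_unique fundamental_theorem_of_calculus) (auto intro: has_vector_derivative_at_within deriv)
  finally show "f t = f 0 + (LINT s:{0..t}|lborel. f' s)" by simp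
qed

lemma admissible_perturb:
  assumes sol: "newton_solution q v" and centred: "\<forall>t\<in>{0..1}. q 1 t + q 2 t + q 3 t = 0"
    and \<phi>: "\<And>i t. i \<in> {1,2,3} \<Longrightarrow> (\<phi> i has_vector_derivative \<phi>' i t) (at t)"
      "\<And>i. i \<in> {1,2,3} \<Longrightarrow> continuous_on UNIV (\<phi>' i)"
    and \<phi>_centred: "\<And>t. t \<in> {0..1} \<Longrightarrow> \<phi> 1 t + \<phi> 2 t + \<phi> 3 t = 0"
    and "a \<ge> 0" "b \<ge> 0"
    and ends: "\<And>i. i \<in> {1,2,3} \<Longrightarrow> perturb q \<phi> \<epsilon> i 0 = Qs1 a b i \<and> perturb q \<phi> \<epsilon> i 1 = Qe1 c d i"
  shows "admissible (perturb q \<phi> \<epsilon>)"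
  unfolding admissible_def
proof (intro conjI ballI exI)
  fix i :: nat assume i: "i \<in> {1,2,3}"
  show "H1_01 (perturb q \<phi> \<epsilon> i)"
  proof (rule H1_01_if_C1)
    show "(perturb q \<phi> \<epsilon> i has_vector_derivative v i t + \<epsilon> *\<^sub>R \<phi>' i t) (at t)" for t
      using sol \<phi>(1)[OF i] i unfolding newton_solution_def perturb_def by (auto intro!: derivative_eq_intros)
    show "continuous_on UNIV (\<lambda>t. v i t + \<epsilon> *\<^sub>R \<phi>' i t)"
      using newton_solution_continuous(2)[OF sol i] \<phi>(2)[OF i] by (intro continuous_intros)
  qed
next
  fix t :: real assume t: "t \<in> {0..1}"
  have "perturb q \<phi> \<epsilon> 1 t + perturb q \<phi> \<epsilon> 2 t + perturb q \<phi> \<epsilon> 3 t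
      = (q 1 t + q 2 t + q 3 t) + \<epsilon> *\<^sub>R (\<phi> 1 t + \<phi> 2 t + \<phi> 3 t)"
    by (simp add: perturb_def algebra_simps)
  then show "perturb q \<phi> \<epsilon> 1 t + perturb q \<phi> \<epsilon> 2 t + perturb q \<phi> \<epsilon> 3 t = 0"
    using centred \<phi>_centred[OF t] t by simp
qed (use assms(6-8) in auto)

lemma minimizer_start_velocity:
  assumes adm: "admissible q" and minimal: "\<And>p. admissible p \<Longrightarrow> action q \<le> action p"
    and sol: "newton_solution q v" and free: "collision_free_on {0..1} q"
  shows "\<forall>i\<in>{1,2,3}. v i 0 $ 1 = 0"
proof -
  from adm obtain a1 a2 b1 b2 where centred: "\<forall>t\<in>{0..1}. q 1 t + q 2 t + q 3 t = 0"
    and "a1 \<ge> 0" "a2 \<ge> 0" and ends: "\<forall>i\<in>{1,2,3}. q i 0 = Qs1 a1 a2 i \<and> q i 1 = Qe1 b1 b2 i"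
    unfolding admissible_def by blast
  have "q 1 0 \<noteq> q 2 0" "q 2 0 \<noteq> q 3 0" using free unfolding collision_free_on_def by auto
  then have "a1 \<noteq> 0" "a2 \<noteq> 0" using ends by (auto simp: Qs1_def vec2_eq_iff)
  with \<open>a1 \<ge> 0\<close> \<open>a2 \<ge> 0\<close> have "0 < min a1 a2" by simp
  have orthogonal: "(\<Sum>i\<in>{1,2,3}. inner (v i 0) (Qs1 d1 d2 i)) = 0" if d: "\<bar>d1\<bar> \<le> 1" "\<bar>d2\<bar> \<le> 1" for d1 d2
  proof -
    \<comment> \<open>moves the start inside the family \<open>Qs1\<close> and keeps the end fixed\<close>
    let ?\<phi> = "\<lambda>i t. (1 - t) *\<^sub>R Qs1 d1 d2 i"
    have "(\<Sum>i\<in>{1,2,3}. inner (v i 1) (?\<phi> i 1)) = (\<Sum>i\<in>{1,2,3}. inner (v i 0) (?\<phi> i 0))"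
    proof (rule first_variation_boundary[OF sol free, where \<phi>' = "\<lambda>i t. - Qs1 d1 d2 i"])
      show "(?\<phi> i has_vector_derivative - Qs1 d1 d2 i) (at t)" for i t
        by (auto intro!: derivative_eq_intros)
      fix \<epsilon> :: real assume \<epsilon>: "\<bar>\<epsilon>\<bar> < min a1 a2"
      have "\<bar>\<epsilon> * d1\<bar> \<le> \<bar>\<epsilon>\<bar>" "\<bar>\<epsilon> * d2\<bar> \<le> \<bar>\<epsilon>\<bar>" using d by (auto simp: abs_mult intro: mult_left_le)
      with \<epsilon> have "a1 + \<epsilon> * d1 \<ge> 0" "a2 + \<epsilon> * d2 \<ge> 0" by auto
      moreover have "?\<phi> 1 t + ?\<phi> 2 t + ?\<phi> 3 t = 0" for t
        by (simp only: scaleR_add_right[symmetric] Qs1_sum scaleR_zero_right)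
      ultimately have "admissible (perturb q ?\<phi> \<epsilon>)"
        using ends by (intro admissible_perturb[OF sol centred, where \<phi>' = "\<lambda>i t. - Qs1 d1 d2 i"
            and a = "a1 + \<epsilon> * d1" and b = "a2 + \<epsilon> * d2" and c = b1 and d = b2])
          (auto intro!: derivative_eq_intros simp: perturb_def Qs1_add_scaleR)
      then show "action q \<le> action (perturb q ?\<phi> \<epsilon>)" by (rule minimal)
    qed (use \<open>0 < min a1 a2\<close> in auto)
    then show ?thesis by simp
  qed
  have "v 1 0 + v 2 0 + v 3 0 = 0" by (rule newton_solution_total_velocity_zero[OF sol centred])
  with orthogonal[of 1 0] orthogonal[of 0 1] show ?thesis
    by (simp add: Qs1_def inner_vec2 vec2_eq_iff)
qed

lemma minimizer_end_velocity:
  assumes adm: "admissible q" and minimal: "\<And>p. admissible p \<Longrightarrow> action q \<le> action p"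
    and sol: "newton_solution q v" and free: "collision_free_on {0..1} q"
  shows "v 1 1 $ 2 = 0" "v 2 1 $ 1 = v 3 1 $ 1" "v 2 1 $ 2 = - v 3 1 $ 2"
proof -
  from adm obtain a1 a2 b1 b2 where centred: "\<forall>t\<in>{0..1}. q 1 t + q 2 t + q 3 t = 0"
    and "a1 \<ge> 0" "a2 \<ge> 0" and ends: "\<forall>i\<in>{1,2,3}. q i 0 = Qs1 a1 a2 i \<and> q i 1 = Qe1 b1 b2 i"
    unfolding admissible_def by blast
  have orthogonal: "(\<Sum>i\<in>{1,2,3}. inner (v i 1) (Qe1 d1 d2 i)) = 0" for d1 d2
  proof -
    \<comment> \<open>moves the end inside the family \<open>Qe1\<close> and keeps the start fixed\<close>
    let ?\<phi> = "\<lambda>i t. t *\<^sub>R Qe1 d1 d2 i"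
    have "(\<Sum>i\<in>{1,2,3}. inner (v i 1) (?\<phi> i 1)) = (\<Sum>i\<in>{1,2,3}. inner (v i 0) (?\<phi> i 0))"
    proof (rule first_variation_boundary[OF sol free, where \<phi>' = "\<lambda>i t. Qe1 d1 d2 i" and \<delta> = 1])
      show "(?\<phi> i has_vector_derivative Qe1 d1 d2 i) (at t)" for i t
        by (auto intro!: derivative_eq_intros)
      fix \<epsilon> :: real
      have "?\<phi> 1 t + ?\<phi> 2 t + ?\<phi> 3 t = 0" for t
        by (simp only: scaleR_add_right[symmetric] Qe1_sum scaleR_zero_right)
      then have "admissible (perturb q ?\<phi> \<epsilon>)"
        using ends \<open>a1 \<ge> 0\<close> \<open>a2 \<ge> 0\<close>
        by (intro admissible_perturb[OF sol centred, where \<phi>' = "\<lambda>i t. Qe1 d1 d2 i"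
            and a = a1 and b = a2 and c = "b1 + \<epsilon> * d1" and d = "b2 + \<epsilon> * d2"])
          (auto intro!: derivative_eq_intros simp: perturb_def Qe1_add_scaleR)
      then show "action q \<le> action (perturb q ?\<phi> \<epsilon>)" by (rule minimal)
    qed auto
    then show ?thesis by simp
  qed
  have "v 1 1 + v 2 1 + v 3 1 = 0" by (rule newton_solution_total_velocity_zero[OF sol centred])
  with orthogonal[of 1 0] orthogonal[of 0 1]
  show "v 1 1 $ 2 = 0" "v 2 1 $ 1 = v 3 1 $ 1" "v 2 1 $ 2 = - v 3 1 $ 2"
    by (simp_all add: Qe1_def inner_vec2 vec2_eq_iff)
qed

section \<open>Symmetries of the minimizer\<close>

lemma Rx_mult: "Rx *v x = vector [x$1, - x$2]"
  by (simp add: vec2_eq_iff Rx_def matrix_vector_mult_def sum_2)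

lemma Ry_mult: "Ry *v x = vector [- x$1, x$2]"
  by (simp add: vec2_eq_iff Ry_def matrix_vector_mult_def sum_2)

lemma norm_Rx_mult: "norm (Rx *v x) = norm x"
  by (simp add: norm_eq_sqrt_inner inner_vec2 Rx_mult)

lemma norm_Ry_mult: "norm (Ry *v x) = norm x"
  by (simp add: norm_eq_sqrt_inner inner_vec2 Ry_mult)

lemma Rx_Ry_mult: "(Rx ** Ry) *v x = - x"
  by (simp add: matrix_vector_mul_assoc[symmetric] Rx_mult Ry_mult vec2_eq_iff)

lemma time_reversal_symmetry_Rx:
  assumes sol: "newton_solution q v" and free: "collision_free q"
    and init: "\<forall>i\<in>{1,2,3}. q i 0 $ 2 = 0 \<and> v i 0 $ 1 = 0" and i: "i \<in> {1,2,3}"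
  shows "q i t = Rx *v q i (- t)"
proof -
  have perm: "bij_betw id {1::nat,2,3} {1,2,3}" by simp
  from init have "\<forall>i\<in>{1,2,3}. q i 0 = Rx *v q (id i) (0 - 0) \<and> v i 0 = - (Rx *v v (id i) (0 - 0))"
    by (simp add: Rx_mult vec2_eq_iff)
  from newton_solution_unique[OF sol newton_solution_symmetry[OF sol norm_Rx_mult perm]
      free collision_free_symmetry[OF free norm_Rx_mult perm] this i]
  have "q i t = Rx *v q (id i) (0 - t)" .
  then show ?thesis by simp
qed

lemma time_reversal_symmetry_Ry:
  assumes sol: "newton_solution q v" and free: "collision_free q"
    and init: "q 1 1 $ 1 = 0" "q 2 1 = Ry *v q 3 1" "v 1 1 $ 2 = 0" "v 2 1 = - (Ry *v v 3 1)"
    and i: "i \<in> {1,2,3}"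
  shows "q i t = Ry *v q (Transposition.transpose 2 3 i) (2 - t)"
proof -
  have perm: "bij_betw (Transposition.transpose 2 3) {1::nat,2,3} {1,2,3}"
    by simp
  have "q 3 1 = Ry *v q 2 1" "v 3 1 = - (Ry *v v 2 1)"
    using init(2,4) by (simp_all add: Ry_mult vec2_eq_iff)
  with init have "\<forall>i\<in>{1,2,3}. q i 1 = Ry *v q (Transposition.transpose 2 3 i) (2 - 1)
      \<and> v i 1 = - (Ry *v v (Transposition.transpose 2 3 i) (2 - 1))"
    by (auto simp: Ry_mult vec2_eq_iff)
  from newton_solution_unique[OF sol newton_solution_symmetry[OF sol norm_Ry_mult perm]
      free collision_free_symmetry[OF free norm_Ry_mult perm] this i]
  show ?thesis .
qed

theorem lemma6p3:
  fixes q :: motion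
  assumes minimizer: "admissible q" "\<And>p. admissible p \<Longrightarrow> action q \<le> action p"
    and collision_free_01: "\<And>t i j. t \<in> {0..1} \<Longrightarrow> i \<in> {1,2,3} \<Longrightarrow> j \<in> {1,2,3} \<Longrightarrow> i \<noteq> j
          \<Longrightarrow> q i t \<noteq> q j t"
    and no_collision: "\<And>t i j. i \<in> {1,2,3} \<Longrightarrow> j \<in> {1,2,3} \<Longrightarrow> i \<noteq> j \<Longrightarrow> q i t \<noteq> q j t"
    and newton: "\<exists>v. \<forall>i\<in>{1,2,3}. \<forall>t.
          (q i has_vector_derivative v i t) (at t) \<and>
          (v i has_vector_derivative
             (\<Sum>j\<in>{1,2,3} - {i}. (1 / norm (q j t - q i t) ^ 3) *\<^sub>R (q j t - q i t))) (at t)"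
  shows "\<forall>t. (\<forall>i\<in>{1,2,3}. q i t = Rx *v q i (-t)) \<and>
             q 1 (t + 2) = (Rx ** Ry) *v q 1 t \<and>
             q 2 (t + 2) = (Rx ** Ry) *v q 3 t \<and>
             q 3 (t + 2) = (Rx ** Ry) *v q 2 t"
proof -
  obtain v where sol: "newton_solution q v"
    using newton unfolding newton_solution_def force_def inverse_square_field_def by blast
  have free: "collision_free q" using no_collision unfolding collision_free_on_def by blast
  have free_01: "collision_free_on {0..1} q" using collision_free_01 unfolding collision_free_on_def by blast
  from minimizer(1) obtain a1 a2 b1 b2 where ends: "\<forall>i\<in>{1,2,3}. q i 0 = Qs1 a1 a2 i \<and> q i 1 = Qe1 b1 b2 i"
    unfolding admissible_def by blast
  have sym_Rx: "q i t = Rx *v q i (- t)" if "i \<in> {1,2,3}" for i t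
    using ends minimizer_start_velocity[OF minimizer sol free_01] that
    by (intro time_reversal_symmetry_Rx[OF sol free]) (auto simp: Qs1_def)
  have sym_Ry: "q i t = Ry *v q (Transposition.transpose 2 3 i) (2 - t)" if "i \<in> {1,2,3}" for i t
    using ends minimizer_end_velocity[OF minimizer sol free_01] that
    by (intro time_reversal_symmetry_Ry[OF sol free]) (auto simp: Qe1_def Ry_mult vec2_eq_iff)
  have half_period: "q i (t + 2) = (Rx ** Ry) *v q (Transposition.transpose 2 3 i) t"
    if "i \<in> {1,2,3}" for i t
  proof -
    have "Transposition.transpose 2 3 i \<in> {1,2,3}" using that by auto
    from sym_Ry[OF that, of "t + 2"] sym_Rx[OF this, of "- t"]
    show ?thesis by (simp add: Rx_Ry_mult Rx_mult Ry_mult vec2_eq_iff)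
  qed
  show ?thesis
  proof (intro allI conjI ballI)
    show "q i t = Rx *v q i (- t)" if "i \<in> {1,2,3}" for i t by (rule sym_Rx[OF that])
    show "q 1 (t + 2) = (Rx ** Ry) *v q 1 t" "q 2 (t + 2) = (Rx ** Ry) *v q 3 t"
      "q 3 (t + 2) = (Rx ** Ry) *v q 2 t" for t
      using half_period[of 1 t] half_period[of 2 t] half_period[of 3 t] by simp_all
  qed
qed

end
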